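(* Let $G$ be a graph and let $P=\langle p_1,\dots,p_m\rangle$ and $Q=\langle q_1,\dots,q_n\rangle$ be vertex-disjoint induced paths in $G$ such that $\mathrm{tw}\big(G[V(P)\cup V(Q)]\cup\{p_1q_1,p_mq_n\}\big)\le 2$. Then for every $i,j$ with $p_iq_j\in E(G)$, the set $\{p_i,q_j\}$ separates $\{p_1,\dots,p_{i-1}\}\cup\{q_1,\dots,q_{j-1}\}$ from $\{p_{i+1},\dots,p_m\}\cup\{q_{j+1},\dots,q_n\}$ in $G[V(P)\cup V(Q)]$.
   Context: $\mathrm{tw}$ is treewidth. A path is induced if it is an induced subgraph. For a graph $F$ and a set of vertex pairs $E'$, $F\cup E'$ is $F$ with these pairs added as edges. A set $S$ separates $A$ from $B$ (disjoint from $S$) if no path in the graph minus $S$ joins a vertex of $A$ to a vertex of $B$. *)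

theory Defs
  imports Main
begin

definition sgraph :: "'a set \<Rightarrow> 'a set set \<Rightarrow> bool" where
  "sgraph V E \<longleftrightarrow> finite V \<and>
     (\<forall>e\<in>E. \<exists>u v. e = {u, v} \<and> u \<noteq> v \<and> u \<in> V \<and> v \<in> V)"

definition walk :: "'a set set \<Rightarrow> 'a list \<Rightarrow> bool" where
  "walk E xs \<longleftrightarrow> xs \<noteq> [] \<and> (\<forall>i. Suc i < length xs \<longrightarrow> {xs ! i, xs ! Suc i} \<in> E)"

definition connected_graph :: "'a set \<Rightarrow> 'a set set \<Rightarrow> bool" where
  "connected_graph V E \<longleftrightarrow>
     (\<forall>u\<in>V. \<forall>v\<in>V. \<exists>xs. walk E xs \<and> set xs \<subseteq> V \<and> hd xs = u \<and> last xs = v)"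

definition induced_edges :: "'a set set \<Rightarrow> 'a set \<Rightarrow> 'a set set" where
  "induced_edges E X = {e \<in> E. e \<subseteq> X}"

definition is_tree :: "'a set \<Rightarrow> 'a set set \<Rightarrow> bool" where
  "is_tree I F \<longleftrightarrow> I \<noteq> {} \<and> sgraph I F \<and> connected_graph I F \<and>
     (\<forall>e\<in>F. \<not> connected_graph I (F - {e}))"

definition tree_decomposition ::
  "'a set \<Rightarrow> 'a set set \<Rightarrow> nat set \<Rightarrow> nat set set \<Rightarrow> (nat \<Rightarrow> 'a set) \<Rightarrow> bool" where
  "tree_decomposition V E I F B \<longleftrightarrow>
     is_tree I F \<and>
     (\<forall>t\<in>I. B t \<subseteq> V) \<and>
     (\<forall>v\<in>V. \<exists>t\<in>I. v \<in> B t) \<and>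
     (\<forall>e\<in>E. \<exists>t\<in>I. e \<subseteq> B t) \<and>
     (\<forall>v\<in>V. connected_graph {t\<in>I. v \<in> B t} (induced_edges F {t\<in>I. v \<in> B t}))"

definition treewidth :: "'a set \<Rightarrow> 'a set set \<Rightarrow> nat" where
  "treewidth V E = (LEAST k. \<exists>I F B. tree_decomposition V E I F B \<and> (\<forall>t\<in>I. card (B t) \<le> k + 1))"

definition induced_path :: "'a set \<Rightarrow> 'a set set \<Rightarrow> 'a list \<Rightarrow> bool" where
  "induced_path V E ps \<longleftrightarrow> ps \<noteq> [] \<and> distinct ps \<and> set ps \<subseteq> V \<and>
     (\<forall>i<length ps. \<forall>j<length ps. {ps ! i, ps ! j} \<in> E \<longleftrightarrow> (i = Suc j \<or> j = Suc i))"

definition separates :: "'a set \<Rightarrow> 'a set set \<Rightarrow> 'a set \<Rightarrow> 'a set \<Rightarrow> 'a set \<Rightarrow> bool" where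
  "separates V E S A B \<longleftrightarrow> A \<inter> S = {} \<and> B \<inter> S = {} \<and>
     \<not> (\<exists>xs. walk E xs \<and> set xs \<subseteq> V - S \<and> hd xs \<in> A \<and> last xs \<in> B)"

end

theory Submission
  imports Defs
begin

(*
  Suppose some walk in G[P \<union> Q] avoiding p_i and q_j leads from the left part
  L = {p_1..p_(i-1)} \<union> {q_1..q_(j-1)} to the right part R = {p_(i+1)..p_m} \<union> {q_(j+1)..q_n};
  then some vertex of L is adjacent to some vertex of R. In H = G[P \<union> Q] + p_1q_1 + p_mq_n the
  four sets {p_i}, {q_j}, L and R are pairwise disjoint, connected (L through p_1q_1, R through
  p_mq_n) and pairwise adjacent, i.e. they are the branch sets of a K4 minor. In a tree
  decomposition the bags meeting a connected set form a subtree, adjacent sets give intersecting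
  subtrees, and by the Helly property of subtrees one bag meets all four sets. That bag has at
  least four vertices, contradicting treewidth at most 2.
*)

section \<open>Walks\<close>

lemma walk_iff_successively: "walk E xs \<longleftrightarrow> xs \<noteq> [] \<and> successively (\<lambda>a b. {a, b} \<in> E) xs"
  unfolding walk_def successively_conv_nth by simp

lemma walk_nonempty: "walk E xs \<Longrightarrow> xs \<noteq> []"
  by (simp add: walk_def)

lemma walk_Nil [simp]: "\<not> walk E []"
  by (simp add: walk_def)

lemma walk_singleton [simp]: "walk E [x]"
  by (simp add: walk_iff_successively)

lemma walk_Cons_Cons: "walk E (x # y # zs) \<longleftrightarrow> {x, y} \<in> E \<and> walk E (y # zs)"
  by (simp add: walk_iff_successively)

lemma walk_append_iff:
  "walk E (xs @ ys) \<longleftrightarrow>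
     (xs = [] \<and> walk E ys) \<or> (ys = [] \<and> walk E xs) \<or> (walk E xs \<and> walk E ys \<and> {last xs, hd ys} \<in> E)"
  by (auto simp: walk_iff_successively successively_append_iff)

lemma walk_rev [simp]: "walk E (rev xs) \<longleftrightarrow> walk E xs"
  by (simp add: walk_iff_successively insert_commute)

lemma walk_appendD1: "walk E (xs @ ys) \<Longrightarrow> xs \<noteq> [] \<Longrightarrow> walk E xs"
  by (auto simp: walk_append_iff)

lemma walk_appendD2: "walk E (xs @ ys) \<Longrightarrow> ys \<noteq> [] \<Longrightarrow> walk E ys"
  by (auto simp: walk_append_iff)

lemma walk_take: "walk E xs \<Longrightarrow> take n xs \<noteq> [] \<Longrightarrow> walk E (take n xs)"
  using walk_append_iff[of E "take n xs" "drop n xs"] by auto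

lemma walk_mono:
  assumes "walk E xs" and "\<And>a b. a \<in> set xs \<Longrightarrow> b \<in> set xs \<Longrightarrow> {a, b} \<in> E \<Longrightarrow> {a, b} \<in> E'"
  shows "walk E' xs"
  using assms(1) successively_mono[of "\<lambda>a b. {a, b} \<in> E" xs "\<lambda>a b. {a, b} \<in> E'", OF _ assms(2)]
  unfolding walk_iff_successively by blast

lemma walk_subset: "walk E xs \<Longrightarrow> E \<subseteq> E' \<Longrightarrow> walk E' xs"
  by (erule walk_mono) blast

lemma walk_induced_edges: "walk E xs \<Longrightarrow> set xs \<subseteq> U \<Longrightarrow> walk (induced_edges E U) xs"
  by (erule walk_mono) (auto simp: induced_edges_def)

lemma induced_path_walk: "induced_path V E ps \<Longrightarrow> walk E ps"
  unfolding induced_path_def walk_def by auto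

lemma walk_join:
  assumes "walk E xs" "walk E ys" "last xs = hd ys"
  shows "walk E (xs @ tl ys) \<and> hd (xs @ tl ys) = hd xs \<and> last (xs @ tl ys) = last ys \<and>
    set (xs @ tl ys) \<subseteq> set xs \<union> set ys"
proof -
  obtain y ys' where ys: "ys = y # ys'"
    using walk_nonempty[OF assms(2)] by (cases ys) auto
  show ?thesis
  proof (cases ys')
    case Nil
    then show ?thesis using assms ys walk_nonempty[OF assms(1)] by auto
  next
    case (Cons z zs)
    then show ?thesis
      using assms ys walk_nonempty[OF assms(1)] by (auto simp: walk_append_iff walk_Cons_Cons)
  qed
qed

lemma walk_first_edge:
  assumes "walk E xs" "hd xs \<noteq> last xs"
  obtains y where "{hd xs, y} \<in> E" "y \<in> set xs"
proof -
  obtain x r where xr: "xs = x # r" using walk_nonempty[OF assms(1)] by (cases xs) auto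
  with assms(2) obtain y ys where "r = y # ys" by (cases r) auto
  then show thesis using that assms(1) xr by (auto simp: walk_Cons_Cons)
qed

lemma walk_crossing_edge:
  assumes "walk E xs" "set xs \<subseteq> X \<union> Y" "hd xs \<in> X" "last xs \<in> Y" "X \<inter> Y = {}"
  shows "\<exists>a\<in>X. \<exists>b\<in>Y. {a, b} \<in> E"
  using assms
proof (induction xs)
  case (Cons x xs)
  show ?case
  proof (cases xs)
    case Nil
    then show ?thesis using Cons.prems by auto
  next
    case (Cons y ys)
    show ?thesis
    proof (cases "y \<in> Y")
      case True
      then show ?thesis using Cons.prems \<open>xs = y # ys\<close> by (auto simp: walk_Cons_Cons)
    next
      case False
      then show ?thesis using Cons.IH Cons.prems \<open>xs = y # ys\<close> by (auto simp: walk_Cons_Cons)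
    qed
  qed
qed simp

lemma separatesI:
  assumes "V - S \<subseteq> A \<union> B" "A \<inter> B = {}" "A \<inter> S = {}" "B \<inter> S = {}"
    and "\<forall>a\<in>A. \<forall>b\<in>B. {a, b} \<notin> E"
  shows "separates V E S A B"
  unfolding separates_def
proof (intro conjI notI)
  assume "\<exists>xs. walk E xs \<and> set xs \<subseteq> V - S \<and> hd xs \<in> A \<and> last xs \<in> B"
  then obtain xs where xs: "walk E xs" "set xs \<subseteq> A \<union> B" "hd xs \<in> A" "last xs \<in> B"
    using assms(1) by blast
  then show False using walk_crossing_edge[OF xs assms(2)] assms(5) by blast
qed (fact assms)+

section \<open>Connected vertex sets\<close>

lemma connected_graphD:
  "connected_graph V E \<Longrightarrow> u \<in> V \<Longrightarrow> v \<in> V \<Longrightarrow>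
    \<exists>xs. walk E xs \<and> set xs \<subseteq> V \<and> hd xs = u \<and> last xs = v"
  unfolding connected_graph_def by blast

lemma connected_graph_from_hub:
  assumes "\<And>v. v \<in> S \<Longrightarrow> \<exists>xs. walk E xs \<and> set xs \<subseteq> S \<and> hd xs = u \<and> last xs = v"
  shows "connected_graph S E"
  unfolding connected_graph_def
proof (intro ballI)
  fix a b assume "a \<in> S" "b \<in> S"
  obtain xs where xs: "walk E xs" "set xs \<subseteq> S" "hd xs = u" "last xs = a"
    using assms[OF \<open>a \<in> S\<close>] by blast
  obtain ys where ys: "walk E ys" "set ys \<subseteq> S" "hd ys = u" "last ys = b"
    using assms[OF \<open>b \<in> S\<close>] by blast
  have r: "walk E (rev xs)" "last (rev xs) = hd ys" "hd (rev xs) = a"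
    using xs ys walk_nonempty[OF xs(1)] by (auto simp: hd_rev last_rev)
  show "\<exists>zs. walk E zs \<and> set zs \<subseteq> S \<and> hd zs = a \<and> last zs = b"
    using walk_join[OF r(1) ys(1) r(2)] r(3) xs(2) ys(2,4) by (intro exI[of _ "rev xs @ tl ys"]) auto
qed

lemma connected_graph_add_pendant:
  assumes "connected_graph S E" "u \<in> S" "{u, l} \<in> E'" "E \<subseteq> E'"
  shows "connected_graph (insert l S) E'"
proof (rule connected_graph_from_hub)
  fix v assume v: "v \<in> insert l S"
  show "\<exists>xs. walk E' xs \<and> set xs \<subseteq> insert l S \<and> hd xs = u \<and> last xs = v"
  proof (cases "v = l")
    case True
    then show ?thesis using assms(2,3) by (intro exI[of _ "[u, l]"]) (simp add: walk_Cons_Cons)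
  next
    case False
    then obtain xs where "walk E xs" "set xs \<subseteq> S" "hd xs = u" "last xs = v"
      using connected_graphD[OF assms(1,2)] v by blast
    then show ?thesis using walk_mono[of E xs E'] assms(4) by blast
  qed
qed

definition connected_in :: "'a set set \<Rightarrow> 'a set \<Rightarrow> bool" where
  "connected_in F S \<longleftrightarrow> connected_graph S (induced_edges F S)"

lemma connected_inD:
  assumes "connected_in F S" "u \<in> S" "v \<in> S" "S \<subseteq> T"
  shows "\<exists>xs. walk (induced_edges F T) xs \<and> set xs \<subseteq> S \<and> hd xs = u \<and> last xs = v"
proof -
  obtain xs where xs: "walk (induced_edges F S) xs" "set xs \<subseteq> S" "hd xs = u" "last xs = v"
    using connected_graphD[OF assms(1)[unfolded connected_in_def] assms(2,3)] by blast
  have "walk (induced_edges F T) xs"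
    by (rule walk_mono[OF xs(1)]) (use assms(4) in \<open>auto simp: induced_edges_def\<close>)
  then show ?thesis using xs by blast
qed

lemma connected_in_Un:
  assumes "connected_in F S" "connected_in F T" "S \<inter> T \<noteq> {}"
  shows "connected_in F (S \<union> T)"
proof -
  obtain w where w: "w \<in> S" "w \<in> T" using assms(3) by blast
  have hub: "\<exists>xs. walk (induced_edges F (S \<union> T)) xs \<and> set xs \<subseteq> S \<union> T \<and> hd xs = w \<and> last xs = v"
    if v: "v \<in> S \<union> T" for v
  proof (cases "v \<in> S")
    case True
    then obtain xs where "walk (induced_edges F (S \<union> T)) xs" "set xs \<subseteq> S" "hd xs = w" "last xs = v"
      using connected_inD[OF assms(1) w(1), of v "S \<union> T"] by auto
    then show ?thesis by auto
  next
    case False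
    then obtain xs where "walk (induced_edges F (S \<union> T)) xs" "set xs \<subseteq> T" "hd xs = w" "last xs = v"
      using v connected_inD[OF assms(2) w(2), of v "S \<union> T"] by auto
    then show ?thesis by auto
  qed
  show ?thesis
    unfolding connected_in_def by (rule connected_graph_from_hub[of "S \<union> T" _ w, OF hub])
qed

lemma walk_avoiding_edge:
  assumes "walk (F - {{u, l}}) d" "set d \<subseteq> I" "hd d = u" "last d = l"
  shows "walk F xs \<Longrightarrow> set xs \<subseteq> I \<Longrightarrow>
    \<exists>ys. walk (F - {{u, l}}) ys \<and> set ys \<subseteq> I \<and> hd ys = hd xs \<and> last ys = last xs"
proof (induction xs rule: induct_list012)
  case (2 x)
  then show ?case by (intro exI[of _ "[x]"]) simp
next
  case (3 x y zs)
  obtain ys where ys: "walk (F - {{u, l}}) ys" "set ys \<subseteq> I" "hd ys = y" "last ys = last (y # zs)"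
    using 3 by (auto simp: walk_Cons_Cons)
  show ?case
  proof (cases "{x, y} = {u, l}")
    case True
    have "\<exists>d'. walk (F - {{u, l}}) d' \<and> set d' \<subseteq> I \<and> hd d' = x \<and> last d' = y"
    proof (cases "x = u")
      case True
      then show ?thesis using assms \<open>{x, y} = {u, l}\<close> by (auto simp: doubleton_eq_iff)
    next
      case False
      then have "x = l" "y = u" using \<open>{x, y} = {u, l}\<close> by (auto simp: doubleton_eq_iff)
      then show ?thesis using assms walk_nonempty[OF assms(1)]
        by (intro exI[of _ "rev d"]) (auto simp: hd_rev last_rev)
    qed
    then obtain d' where d': "walk (F - {{u, l}}) d'" "set d' \<subseteq> I" "hd d' = x" "last d' = y"
      by blast
    show ?thesis
      using walk_join[OF d'(1) ys(1)] d' ys by (intro exI[of _ "d' @ tl ys"]) auto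
  next
    case False
    have "ys = y # tl ys" using ys(1,3) by (cases ys) auto
    then have "walk (F - {{u, l}}) (x # ys)"
      using ys(1) "3.prems"(1) False by (metis Diff_iff singletonD walk_Cons_Cons)
    then show ?thesis using ys "3.prems" by (intro exI[of _ "x # ys"]) auto
  qed
qed simp

lemma connected_graph_Diff_edge:
  assumes "connected_graph I F" "walk (F - {{u, l}}) d" "set d \<subseteq> I" "hd d = u" "last d = l"
  shows "connected_graph I (F - {{u, l}})"
  unfolding connected_graph_def
proof (intro ballI)
  fix a b assume "a \<in> I" "b \<in> I"
  then obtain xs where "walk F xs" "set xs \<subseteq> I" "hd xs = a" "last xs = b"
    using connected_graphD[OF assms(1)] by blast
  then show "\<exists>ys. walk (F - {{u, l}}) ys \<and> set ys \<subseteq> I \<and> hd ys = a \<and> last ys = b"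
    using walk_avoiding_edge[OF assms(2-5)] by blast
qed

section \<open>Leaves of trees and the Helly property of subtrees\<close>

lemma sgraph_edgeD: "sgraph I F \<Longrightarrow> {x, y} \<in> F \<Longrightarrow> x \<noteq> y \<and> x \<in> I \<and> y \<in> I"
  unfolding sgraph_def by (metis doubleton_eq_iff)

lemma induced_edges_sgraph: "sgraph I F \<Longrightarrow> induced_edges F I = F"
  unfolding sgraph_def induced_edges_def by auto

lemma edges_at_leaf:
  assumes "sgraph I F" "\<forall>w. {l, w} \<in> F \<longrightarrow> w = u"
  shows "\<forall>e\<in>F. l \<in> e \<longrightarrow> e = {l, u}"
proof (intro ballI impI)
  fix e assume "e \<in> F" "l \<in> e"
  then obtain a where "e = {l, a}"
    using assms(1) unfolding sgraph_def by (metis insert_commute insertE singletonD)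
  then show "e = {l, u}" using assms(2) \<open>e \<in> F\<close> by blast
qed

lemma walk_avoiding_leaf:
  assumes "\<forall>e\<in>E. l \<in> e \<longrightarrow> e = {l, u}" "u \<noteq> l"
  shows "walk E xs \<Longrightarrow> hd xs \<noteq> l \<Longrightarrow> last xs \<noteq> l \<Longrightarrow>
    \<exists>ys. walk E ys \<and> set ys \<subseteq> set xs - {l} \<and> hd ys = hd xs \<and> last ys = last xs"
proof (induction "length xs" arbitrary: xs rule: less_induct)
  case less
  show ?case
  proof (cases "l \<in> set xs")
    case False
    then show ?thesis using less.prems by (intro exI[of _ xs]) auto
  next
    case True
    then obtain as bs where xs: "xs = as @ l # bs" by (meson split_list)
    have "as \<noteq> []" "bs \<noteq> []" using less.prems xs by auto
    then obtain b bs' where bs: "bs = b # bs'" by (cases bs) auto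
    have wa: "walk E as" and wl: "walk E (l # bs)" and "{last as, l} \<in> E"
      using less.prems(1) \<open>as \<noteq> []\<close> unfolding xs by (auto simp: walk_append_iff)
    then have "{last as, l} = {l, u}" using assms(1) by auto
    then have lu: "last as = u" using assms(2) by (auto simp: doubleton_eq_iff)
    have "{l, b} = {l, u}" using wl bs assms(1) by (simp add: walk_Cons_Cons)
    then have bu: "b = u" using assms(2) by (auto simp: doubleton_eq_iff)
    \<comment> \<open>the leaf can only be entered from and left to its neighbour, so cut out the detour\<close>
    define zs where "zs = as @ bs'"
    have wz: "walk E zs"
    proof (cases bs')
      case Nil
      then show ?thesis using wa zs_def by simp
    next
      case (Cons c cs)
      then have "walk E (u # c # cs)" using wl bs bu by (simp add: walk_Cons_Cons)
      then show ?thesis using wa lu Cons zs_def by (auto simp: walk_append_iff walk_Cons_Cons)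
    qed
    have len: "length zs < length xs" and sz: "set zs \<subseteq> set xs" and hz: "hd zs = hd xs"
      using xs bs zs_def \<open>as \<noteq> []\<close> by auto
    have lz: "last zs = last xs"
      using xs zs_def \<open>as \<noteq> []\<close> bs bu lu by (cases bs') auto
    obtain ys where "walk E ys" "set ys \<subseteq> set zs - {l}" "hd ys = hd zs" "last ys = last zs"
      using less.hyps[OF len wz] less.prems(2,3) hz lz by auto
    then show ?thesis using sz hz lz by (intro exI[of _ ys]) auto
  qed
qed

lemma connected_in_remove_leaf:
  assumes lF: "\<forall>e\<in>F. l \<in> e \<longrightarrow> e = {l, u}" and "u \<noteq> l" and "connected_in F S"
  shows "connected_in (F - {{l, u}}) (S - {l})"
  unfolding connected_in_def connected_graph_def
proof (intro ballI)
  fix a b assume ab: "a \<in> S - {l}" "b \<in> S - {l}"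
  obtain xs where xs: "walk (induced_edges F S) xs" "set xs \<subseteq> S" "hd xs = a" "last xs = b"
    using connected_inD[OF assms(3), of a b S] ab by auto
  have "\<forall>e\<in>induced_edges F S. l \<in> e \<longrightarrow> e = {l, u}"
    using lF by (simp add: induced_edges_def)
  then obtain ys where ys: "walk (induced_edges F S) ys" "set ys \<subseteq> set xs - {l}" "hd ys = a" "last ys = b"
    using walk_avoiding_leaf[OF _ assms(2) xs(1)] xs(3,4) ab by auto
  have "walk (induced_edges (F - {{l, u}}) (S - {l})) ys"
  proof (rule walk_mono[OF ys(1)])
    fix x y assume "x \<in> set ys" "y \<in> set ys" "{x, y} \<in> induced_edges F S"
    moreover have "{x, y} \<noteq> {l, u}" using calculation(1,2) ys(2) by auto
    ultimately show "{x, y} \<in> induced_edges (F - {{l, u}}) (S - {l})"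
      using ys(2) xs(2) by (auto simp: induced_edges_def)
  qed
  then show "\<exists>zs. walk (induced_edges (F - {{l, u}}) (S - {l})) zs \<and> set zs \<subseteq> S - {l} \<and>
      hd zs = a \<and> last zs = b"
    using ys xs(2) by blast
qed

lemma tree_remove_leaf:
  assumes T: "is_tree I F" and e: "{l, u} \<in> F" and leaf: "\<forall>w. {l, w} \<in> F \<longrightarrow> w = u"
  shows "is_tree (I - {l}) (F - {{l, u}})"
proof -
  have sg: "sgraph I F" and cg: "connected_graph I F" and br: "\<forall>e\<in>F. \<not> connected_graph I (F - {e})"
    using T by (auto simp: is_tree_def)
  have lu: "l \<noteq> u" "l \<in> I" "u \<in> I" using sgraph_edgeD[OF sg e] by auto
  have lF: "\<forall>e\<in>F. l \<in> e \<longrightarrow> e = {l, u}" using edges_at_leaf[OF sg leaf] .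
  have sg': "sgraph (I - {l}) (F - {{l, u}})"
    unfolding sgraph_def
  proof (intro conjI ballI)
    show "finite (I - {l})" using sg by (simp add: sgraph_def)
    fix e assume "e \<in> F - {{l, u}}"
    moreover obtain a b where "e = {a, b}" "a \<noteq> b" "a \<in> I" "b \<in> I"
      using sg calculation unfolding sgraph_def by blast
    moreover have "l \<notin> e" using lF calculation(1) by blast
    ultimately show "\<exists>a b. e = {a, b} \<and> a \<noteq> b \<and> a \<in> I - {l} \<and> b \<in> I - {l}" by blast
  qed
  have "connected_in (F - {{l, u}}) (I - {l})"
    using connected_in_remove_leaf[OF lF lu(1)[symmetric]] cg
    by (simp add: connected_in_def induced_edges_sgraph[OF sg])
  then have cg': "connected_graph (I - {l}) (F - {{l, u}})"
    by (simp add: connected_in_def induced_edges_sgraph[OF sg'])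
  \<comment> \<open>reattaching the pendant vertex l would make I connected without e\<close>
  have br': "\<not> connected_graph (I - {l}) (F - {{l, u}} - {e})" if "e \<in> F - {{l, u}}" for e
  proof
    assume "connected_graph (I - {l}) (F - {{l, u}} - {e})"
    moreover have "{u, l} \<in> F - {e}" using e that by (auto simp: insert_commute)
    ultimately have "connected_graph (insert l (I - {l})) (F - {e})"
      using lu by (intro connected_graph_add_pendant[of _ _ u]) auto
    then show False using br that lu(2) by (simp add: insert_absorb)
  qed
  show ?thesis unfolding is_tree_def using lu sg' cg' br' by blast
qed

lemma leaf_at_end_of_maximal_path:
  assumes T: "is_tree I F"
    and p: "walk F (as @ [u, l])" "distinct (as @ [u, l])" "set (as @ [u, l]) \<subseteq> I"
    and maximal: "\<forall>w. {l, w} \<in> F \<longrightarrow> w \<in> set (as @ [u, l])"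
  shows "\<forall>w. {l, w} \<in> F \<longrightarrow> w = u"
proof (intro allI impI, rule ccontr)
  fix w assume ew: "{l, w} \<in> F" and "w \<noteq> u"
  have sg: "sgraph I F" and cg: "connected_graph I F" and br: "\<forall>e\<in>F. \<not> connected_graph I (F - {e})"
    using T by (auto simp: is_tree_def)
  have "w \<noteq> l" using sgraph_edgeD[OF sg ew] by auto
  have "w \<in> set (as @ [u, l])" using maximal ew by blast
  then have "w \<in> set as" using \<open>w \<noteq> u\<close> \<open>w \<noteq> l\<close> by simp
  then obtain cs ds where as: "as = cs @ w # ds" by (meson split_list)
  define seg where "seg = w # ds @ [u]"
  have p': "as @ [u, l] = cs @ seg @ [l]" using as seg_def by simp
  have "walk F ((cs @ seg) @ [l])" using p(1) unfolding p' by simp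
  then have "walk F (cs @ seg)" by (rule walk_appendD1) (simp add: seg_def)
  then have "walk F seg" by (rule walk_appendD2) (simp add: seg_def)
  have "l \<notin> set seg" using p(2) unfolding p' by auto
  have "walk (F - {{u, l}}) (rev seg)"
  proof (rule walk_mono[of F])
    show "walk F (rev seg)" using \<open>walk F seg\<close> by simp
    fix x y assume "x \<in> set (rev seg)" "y \<in> set (rev seg)" "{x, y} \<in> F"
    then show "{x, y} \<in> F - {{u, l}}" using \<open>l \<notin> set seg\<close> by (auto simp: doubleton_eq_iff)
  qed
  moreover have "{w, l} \<in> F - {{u, l}}"
  proof -
    have "{w, l} \<in> F" using ew by (simp add: insert_commute)
    moreover have "{w, l} \<noteq> {u, l}" using \<open>w \<noteq> u\<close> \<open>w \<noteq> l\<close> by (auto simp: doubleton_eq_iff)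
    ultimately show ?thesis by simp
  qed
  moreover have "last (rev seg) = w" "seg \<noteq> []" by (simp_all add: seg_def)
  ultimately have "walk (F - {{u, l}}) (rev seg @ [l])"
    by (simp add: walk_append_iff)
  moreover have "set (rev seg @ [l]) \<subseteq> I"
    using p(3) unfolding p' by auto
  moreover have "hd (rev seg @ [l]) = u" "last (rev seg @ [l]) = l"
    by (simp_all add: seg_def)
  \<comment> \<open>the path closes a cycle through the edge {u, l}, which therefore is no bridge\<close>
  ultimately have "connected_graph I (F - {{u, l}})"
    by (rule connected_graph_Diff_edge[OF cg])
  moreover have "{u, l} \<in> F"
    using p(1) walk_appendD2[of F as "[u, l]"] by (simp add: walk_Cons_Cons)
  ultimately show False using br by blast
qed

lemma ex_longest_path:
  assumes "finite I" "walk F p0" "distinct p0" "set p0 \<subseteq> I"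
  obtains p where "walk F p" "distinct p" "set p \<subseteq> I" "length p0 \<le> length p"
    "\<And>q. walk F q \<Longrightarrow> distinct q \<Longrightarrow> set q \<subseteq> I \<Longrightarrow> length q \<le> length p"
proof -
  define P where "P k \<longleftrightarrow> (\<exists>p. walk F p \<and> distinct p \<and> set p \<subseteq> I \<and> length p = k)" for k
  have "P (length p0)" unfolding P_def using assms(2-4) by blast
  moreover have bound: "\<forall>k. P k \<longrightarrow> k \<le> card I"
  proof (intro allI impI)
    fix k assume "P k"
    then obtain p where "distinct p" "set p \<subseteq> I" "length p = k" unfolding P_def by blast
    then show "k \<le> card I" using card_mono[OF assms(1)] distinct_card by metis
  qed
  ultimately obtain k where "P k" and kmax: "\<forall>k'. P k' \<longrightarrow> k' \<le> k"
    using Nat.ex_has_greatest_nat[OF \<open>P (length p0)\<close> bound] by blast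
  then obtain p where "walk F p" "distinct p" "set p \<subseteq> I" "length p = k"
    unfolding P_def by blast
  moreover have "length q \<le> k" if "walk F q" "distinct q" "set q \<subseteq> I" for q
    using kmax that unfolding P_def by blast
  ultimately show thesis using that kmax \<open>P (length p0)\<close> by blast
qed

lemma tree_has_leaf:
  assumes T: "is_tree I F" and "card I \<ge> 2"
  shows "\<exists>l u. {l, u} \<in> F \<and> (\<forall>w. {l, w} \<in> F \<longrightarrow> w = u)"
proof -
  have sg: "sgraph I F" and cg: "connected_graph I F" using T by (auto simp: is_tree_def)
  have fin: "finite I" using sg by (simp add: sgraph_def)
  have "\<not> card I \<le> Suc 0" using assms(2) by simp
  then obtain a b where ab: "a \<in> I" "b \<in> I" "a \<noteq> b"
    using card_le_Suc0_iff_eq[OF fin] by blast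
  obtain xs where xs: "walk F xs" "hd xs = a" "last xs = b"
    using connected_graphD[OF cg ab(1,2)] by blast
  then have "hd xs \<noteq> last xs" using ab(3) by simp
  then obtain y where "{hd xs, y} \<in> F" using walk_first_edge[OF xs(1)] by blast
  then have ay: "{a, y} \<in> F" using xs(2) by simp
  then have "walk F [a, y]" "distinct [a, y]" "set [a, y] \<subseteq> I"
    using sgraph_edgeD[OF sg ay] by (simp_all add: walk_Cons_Cons)
  then obtain p where p: "walk F p" "distinct p" "set p \<subseteq> I" "2 \<le> length p"
    and longest: "\<And>q. walk F q \<Longrightarrow> distinct q \<Longrightarrow> set q \<subseteq> I \<Longrightarrow> length q \<le> length p"
    using ex_longest_path[OF fin] by (metis length_Cons list.size(3) numeral_2_eq_2)
  obtain l u rs where r: "rev p = l # u # rs"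
  proof (cases "rev p")
    case Nil
    then show ?thesis using p(4) by simp
  next
    case (Cons l r)
    then show ?thesis using p(4) that by (cases r) auto
  qed
  have "p = rev (rev p)" by simp
  then have pe: "p = rev rs @ [u, l]" using r by simp
  have maximal: "\<forall>w. {l, w} \<in> F \<longrightarrow> w \<in> set p"
  proof (intro allI impI, rule ccontr)
    fix w assume lw: "{l, w} \<in> F" "w \<notin> set p"
    have "walk F (p @ [w])" using p(1) lw(1) by (simp add: walk_append_iff walk_Cons_Cons pe)
    moreover have "distinct (p @ [w])" "set (p @ [w]) \<subseteq> I"
      using p(2,3) lw sgraph_edgeD[OF sg lw(1)] by auto
    ultimately show False using longest[of "p @ [w]"] by simp
  qed
  have "walk F (rev rs @ [u, l])" "distinct (rev rs @ [u, l])" "set (rev rs @ [u, l]) \<subseteq> I"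
    "\<forall>w. {l, w} \<in> F \<longrightarrow> w \<in> set (rev rs @ [u, l])"
    using p(1-3) maximal by (simp_all only: pe)
  then have "\<forall>w. {l, w} \<in> F \<longrightarrow> w = u"
    by (rule leaf_at_end_of_maximal_path[OF T])
  moreover have "{l, u} \<in> F" using p(1) by (auto simp: pe walk_append_iff walk_Cons_Cons insert_commute)
  ultimately show ?thesis by blast
qed

lemma leaf_neighbour_in_connected:
  assumes "connected_in F S" "l \<in> S" "v \<in> S" "v \<noteq> l" and leaf: "\<forall>w. {l, w} \<in> F \<longrightarrow> w = u"
  shows "u \<in> S"
proof -
  obtain xs where xs: "walk (induced_edges F S) xs" "set xs \<subseteq> S" "hd xs = l" "last xs = v"
    using connected_inD[OF assms(1-3) order_refl] by blast
  then have "hd xs \<noteq> last xs" using assms(4) by simp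
  then obtain y where "{hd xs, y} \<in> induced_edges F S"
    using walk_first_edge[OF xs(1)] by blast
  then have "{l, y} \<in> F" using xs(3) by (simp add: induced_edges_def)
  moreover have "y \<in> S" using \<open>{hd xs, y} \<in> induced_edges F S\<close> by (simp add: induced_edges_def)
  ultimately show ?thesis using leaf by blast
qed

lemma subtrees_remove_leaf:
  assumes sg: "sgraph I F" and e: "{l, u} \<in> F" and leaf: "\<forall>w. {l, w} \<in> F \<longrightarrow> w = u"
    and subtrees: "\<forall>S\<in>SS. S \<subseteq> I \<and> connected_in F S"
    and meet: "\<forall>S\<in>SS. \<forall>T\<in>SS. S \<inter> T \<noteq> {}"
    and not_leaf: "\<forall>S\<in>SS. \<not> S \<subseteq> {l}"
  shows "\<forall>S\<in>(\<lambda>S. S - {l}) ` SS. S \<subseteq> I - {l} \<and> connected_in (F - {{l, u}}) S"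
    and "\<forall>S\<in>(\<lambda>S. S - {l}) ` SS. \<forall>T\<in>(\<lambda>S. S - {l}) ` SS. S \<inter> T \<noteq> {}"
proof -
  have "l \<noteq> u" using sgraph_edgeD[OF sg e] by simp
  show "\<forall>S\<in>(\<lambda>S. S - {l}) ` SS. S \<subseteq> I - {l} \<and> connected_in (F - {{l, u}}) S"
  proof
    fix S' assume "S' \<in> (\<lambda>S. S - {l}) ` SS"
    then obtain S where "S \<in> SS" "S' = S - {l}" by blast
    then show "S' \<subseteq> I - {l} \<and> connected_in (F - {{l, u}}) S'"
      using subtrees connected_in_remove_leaf[OF edges_at_leaf[OF sg leaf] \<open>l \<noteq> u\<close>[symmetric]]
      by auto
  qed
  \<comment> \<open>two sets meeting only in the leaf both contain its neighbour\<close>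
  have uS: "u \<in> S" if S: "S \<in> SS" "l \<in> S" for S
  proof -
    have "connected_in F S" using subtrees S(1) by blast
    moreover obtain v where "v \<in> S" "v \<noteq> l" using not_leaf S(1) by blast
    ultimately show ?thesis by (rule leaf_neighbour_in_connected[OF _ S(2) _ _ leaf])
  qed
  show "\<forall>S\<in>(\<lambda>S. S - {l}) ` SS. \<forall>T\<in>(\<lambda>S. S - {l}) ` SS. S \<inter> T \<noteq> {}"
  proof (intro ballI)
    fix S' T' assume "S' \<in> (\<lambda>S. S - {l}) ` SS" "T' \<in> (\<lambda>S. S - {l}) ` SS"
    then obtain S T where ST: "S \<in> SS" "T \<in> SS" "S' = S - {l}" "T' = T - {l}" by blast
    show "S' \<inter> T' \<noteq> {}"
    proof (cases "l \<in> S \<inter> T")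
      case True
      then have "u \<in> S" "u \<in> T" using uS ST(1,2) by blast+
      then show ?thesis using ST \<open>l \<noteq> u\<close> by blast
    next
      case False
      then show ?thesis using meet ST by blast
    qed
  qed
qed

lemma subtrees_Helly:
  assumes "is_tree I F" "\<forall>S\<in>SS. S \<subseteq> I \<and> connected_in F S" "\<forall>S\<in>SS. \<forall>T\<in>SS. S \<inter> T \<noteq> {}"
  shows "\<exists>t\<in>I. \<forall>S\<in>SS. t \<in> S"
  using assms
proof (induction "card I" arbitrary: I F SS rule: less_induct)
  case less
  have sg: "sgraph I F" and "I \<noteq> {}" using less.prems(1) by (auto simp: is_tree_def)
  have fin: "finite I" using sg by (simp add: sgraph_def)
  show ?case
  proof (cases "card I \<ge> 2")
    case False
    moreover have "card I \<noteq> 0" using fin \<open>I \<noteq> {}\<close> by simp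
    ultimately have "card I = Suc 0" by linarith
    then obtain t where "I = {t}" by (auto simp: card_1_singleton_iff)
    moreover have "S \<noteq> {}" if "S \<in> SS" for S using less.prems(3) that by blast
    ultimately show ?thesis using less.prems(2) by blast
  next
    case True
    obtain l u where e: "{l, u} \<in> F" and leaf: "\<forall>w. {l, w} \<in> F \<longrightarrow> w = u"
      using tree_has_leaf[OF less.prems(1) True] by blast
    have "l \<in> I" using sgraph_edgeD[OF sg e] by simp
    show ?thesis
    proof (cases "\<exists>S\<in>SS. S \<subseteq> {l}")
      case True
      then have "\<forall>S\<in>SS. l \<in> S" using less.prems(3) by blast
      then show ?thesis using \<open>l \<in> I\<close> by blast
    next
      case False
      then have "\<forall>S\<in>SS. \<not> S \<subseteq> {l}" by blast
      note smaller = subtrees_remove_leaf[OF sg e leaf less.prems(2,3) this]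
      have "card (I - {l}) < card I" using fin \<open>l \<in> I\<close> by (rule card_Diff1_less)
      moreover have "is_tree (I - {l}) (F - {{l, u}})" by (rule tree_remove_leaf[OF less.prems(1) e leaf])
      ultimately have "\<exists>t\<in>I - {l}. \<forall>S\<in>(\<lambda>S. S - {l}) ` SS. t \<in> S"
        using smaller by (rule less.hyps)
      then show ?thesis by auto
    qed
  qed
qed

section \<open>Tree decompositions\<close>

definition touching :: "'a set set \<Rightarrow> 'a set \<Rightarrow> 'a set \<Rightarrow> bool" where
  "touching H X Y \<longleftrightarrow> (\<exists>x\<in>X. \<exists>y\<in>Y. {x, y} \<in> H)"

definition traversable :: "'a set set \<Rightarrow> 'a set \<Rightarrow> bool" where
  "traversable H X \<longleftrightarrow> (\<exists>xs. walk H xs \<and> set xs = X)"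

lemma touching_commute: "touching H X Y \<longleftrightarrow> touching H Y X"
  unfolding touching_def by (metis insert_commute)

lemma traversable_singleton [simp]: "traversable H {x}"
  unfolding traversable_def by (intro exI[of _ "[x]"]) simp

definition bags_meeting :: "nat set \<Rightarrow> (nat \<Rightarrow> 'a set) \<Rightarrow> 'a set \<Rightarrow> nat set" where
  "bags_meeting I B X = {t \<in> I. B t \<inter> X \<noteq> {}}"

lemma bags_meeting_edge:
  assumes "tree_decomposition V H I F B" "{x, y} \<in> H" "x \<in> X" "y \<in> Y"
  shows "bags_meeting I B X \<inter> bags_meeting I B Y \<noteq> {}"
proof -
  obtain t where "t \<in> I" "{x, y} \<subseteq> B t"
    using assms(1,2) unfolding tree_decomposition_def by blast
  then show ?thesis using assms(3,4) unfolding bags_meeting_def by blast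
qed

lemma bags_meeting_nonempty:
  assumes "tree_decomposition V H I F B" "x \<in> X" "x \<in> V"
  shows "bags_meeting I B X \<noteq> {}"
proof -
  obtain t where "t \<in> I" "x \<in> B t"
    using assms(1,3) unfolding tree_decomposition_def by blast
  then show ?thesis using assms(2) unfolding bags_meeting_def by blast
qed

lemma bags_meeting_vertex_connected:
  assumes "tree_decomposition V H I F B" "x \<in> V"
  shows "connected_in F (bags_meeting I B {x})"
proof -
  have "connected_graph {t \<in> I. x \<in> B t} (induced_edges F {t \<in> I. x \<in> B t})"
    using assms unfolding tree_decomposition_def by simp
  moreover have "bags_meeting I B {x} = {t \<in> I. x \<in> B t}"
    unfolding bags_meeting_def by auto
  ultimately show ?thesis by (simp add: connected_in_def)
qed

lemma bags_meeting_walk_connected: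
  assumes td: "tree_decomposition V H I F B"
  shows "walk H xs \<Longrightarrow> set xs \<subseteq> V \<Longrightarrow> connected_in F (bags_meeting I B (set xs))"
proof (induction xs rule: induct_list012)
  case (2 x)
  then show ?case using bags_meeting_vertex_connected[OF td] by simp
next
  case (3 x y zs)
  have "connected_in F (bags_meeting I B {x})"
    using bags_meeting_vertex_connected[OF td] "3.prems"(2) by simp
  moreover have "connected_in F (bags_meeting I B (set (y # zs)))"
    using "3.IH"(2) "3.prems" by (simp add: walk_Cons_Cons)
  moreover have "bags_meeting I B {x} \<inter> bags_meeting I B (set (y # zs)) \<noteq> {}"
    using "3.prems"(1) by (intro bags_meeting_edge[OF td, of x y]) (simp_all add: walk_Cons_Cons)
  ultimately have "connected_in F (bags_meeting I B {x} \<union> bags_meeting I B (set (y # zs)))"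
    by (rule connected_in_Un)
  moreover have "bags_meeting I B {x} \<union> bags_meeting I B (set (y # zs)) =
      bags_meeting I B (set (x # y # zs))"
    unfolding bags_meeting_def by auto
  ultimately show ?case by simp
qed simp

lemma bags_meeting_traversable:
  assumes td: "tree_decomposition V H I F B" and "X \<subseteq> V" "traversable H X"
  shows "bags_meeting I B X \<subseteq> I" "connected_in F (bags_meeting I B X)" "bags_meeting I B X \<noteq> {}"
proof -
  obtain xs where xs: "walk H xs" "set xs = X" using assms(3) unfolding traversable_def by auto
  show "bags_meeting I B X \<subseteq> I" by (simp add: bags_meeting_def)
  show "connected_in F (bags_meeting I B X)"
    using bags_meeting_walk_connected[OF td xs(1)] xs(2) assms(2) by simp
  have "hd xs \<in> X" using walk_nonempty[OF xs(1)] xs(2) by auto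
  then show "bags_meeting I B X \<noteq> {}"
    using assms(2) by (intro bags_meeting_nonempty[OF td]) auto
qed

lemma tree_decomposition_bag_meets_touching_family:
  assumes td: "tree_decomposition V H I F B"
    and conn: "\<forall>X\<in>W. X \<subseteq> V \<and> traversable H X" and touch: "pairwise (touching H) W"
  shows "\<exists>t\<in>I. \<forall>X\<in>W. B t \<inter> X \<noteq> {}"
proof -
  have "\<exists>t\<in>I. \<forall>S\<in>bags_meeting I B ` W. t \<in> S"
  proof (rule subtrees_Helly)
    show "is_tree I F" using td by (simp add: tree_decomposition_def)
    show "\<forall>S\<in>bags_meeting I B ` W. S \<subseteq> I \<and> connected_in F S"
    proof
      fix S assume "S \<in> bags_meeting I B ` W"
      then obtain X where "X \<in> W" "S = bags_meeting I B X" by blast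
      moreover from \<open>X \<in> W\<close> have "X \<subseteq> V" "traversable H X" using conn by simp_all
      ultimately show "S \<subseteq> I \<and> connected_in F S" using bags_meeting_traversable(1,2)[OF td] by simp
    qed
    show "\<forall>S\<in>bags_meeting I B ` W. \<forall>T\<in>bags_meeting I B ` W. S \<inter> T \<noteq> {}"
    proof (intro ballI)
      fix S T assume "S \<in> bags_meeting I B ` W" "T \<in> bags_meeting I B ` W"
      then obtain X Y where XY: "X \<in> W" "Y \<in> W" "S = bags_meeting I B X" "T = bags_meeting I B Y"
        by blast
      show "S \<inter> T \<noteq> {}"
      proof (cases "X = Y")
        case True
        from XY(1) have "X \<subseteq> V" "traversable H X" using conn by simp_all
        then show ?thesis using bags_meeting_traversable(3)[OF td] True XY(3,4) by simp
      next
        case False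
        then have "touching H X Y" using touch XY(1,2) unfolding pairwise_def by blast
        then obtain x y where "x \<in> X" "y \<in> Y" "{x, y} \<in> H" unfolding touching_def by blast
        then show ?thesis using bags_meeting_edge[OF td] XY(3,4) by simp
      qed
    qed
  qed
  then show ?thesis by (auto simp: bags_meeting_def)
qed

lemma card_touching_family_le_bag:
  assumes td: "tree_decomposition V H I F B" and "finite V"
    and conn: "\<forall>X\<in>W. X \<subseteq> V \<and> traversable H X" and touch: "pairwise (touching H) W"
    and disj: "pairwise disjnt W"
  shows "\<exists>t\<in>I. card W \<le> card (B t)"
proof -
  obtain t where t: "t \<in> I" "\<forall>X\<in>W. B t \<inter> X \<noteq> {}"
    using tree_decomposition_bag_meets_touching_family[OF td conn touch] by blast
  define pick where "pick X = (SOME x. x \<in> B t \<inter> X)" for X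
  have pick: "pick X \<in> B t \<inter> X" if "X \<in> W" for X
  proof -
    have "\<exists>x. x \<in> B t \<inter> X" using t(2) that by blast
    then show ?thesis unfolding pick_def by (rule someI_ex)
  qed
  have "inj_on pick W"
  proof (rule inj_onI)
    fix X Y assume XY: "X \<in> W" "Y \<in> W" "pick X = pick Y"
    then have "\<not> disjnt X Y" using pick[OF XY(1)] pick[OF XY(2)] by (auto simp: disjnt_def)
    then show "X = Y" using disj XY(1,2) unfolding pairwise_def by blast
  qed
  moreover have "pick ` W \<subseteq> B t" using pick by blast
  moreover have "finite (B t)"
  proof -
    have "B t \<subseteq> V" using td t(1) unfolding tree_decomposition_def by blast
    then show ?thesis using \<open>finite V\<close> by (rule finite_subset)
  qed
  ultimately have "card W \<le> card (B t)" by (rule card_inj_on_le)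
  then show ?thesis using t(1) by blast
qed

lemma tree_decomposition_trivial:
  assumes "\<forall>e\<in>H. e \<subseteq> V"
  shows "tree_decomposition V H {0} {} (\<lambda>_. V)"
proof -
  have single: "connected_graph {0 :: nat} E" for E
    unfolding connected_graph_def by (intro ballI exI[of _ "[0]"]) simp
  have "is_tree {0 :: nat} {}" unfolding is_tree_def sgraph_def using single[of "{}"] by simp
  then show ?thesis unfolding tree_decomposition_def using assms by (simp add: single)
qed

lemma tree_decomposition_of_treewidth_le:
  assumes "\<forall>e\<in>H. e \<subseteq> V" "treewidth V H \<le> k"
  obtains I F B where "tree_decomposition V H I F B" "\<forall>t\<in>I. card (B t) \<le> k + 1"
proof -
  have "\<exists>k I F B. tree_decomposition V H I F B \<and> (\<forall>t\<in>I. card (B t) \<le> k + 1)"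
    using tree_decomposition_trivial[OF assms(1)]
    by (intro exI[of _ "card V"] exI[of _ "{0}"] exI[of _ "{}"] exI[of _ "\<lambda>_. V"]) simp
  then have "\<exists>I F B. tree_decomposition V H I F B \<and> (\<forall>t\<in>I. card (B t) \<le> treewidth V H + 1)"
    unfolding treewidth_def by (rule LeastI_ex)
  then show thesis using that assms(2) by (meson add_le_mono1 order_trans)
qed

section \<open>Two induced paths joined at both ends\<close>

lemma set_take_nth_drop:
  "i < length xs \<Longrightarrow> set xs = insert (xs ! i) (set (take i xs) \<union> set (drop (Suc i) xs))"
  by (subst id_take_nth_drop) auto

lemma distinct_append_nth_pieces:
  assumes "distinct (ps @ qs)" "i < length ps" "j < length qs"
  shows "distinct (take i ps @ ps ! i # drop (Suc i) ps @ take j qs @ qs ! j # drop (Suc j) qs)"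
  using assms(1) id_take_nth_drop[OF assms(2)] id_take_nth_drop[OF assms(3)]
  by (metis append.assoc append_Cons)

lemma walk_joined_prefixes:
  assumes "walk H ps" "walk H qs" "{hd ps, hd qs} \<in> H" "rev (take i ps) @ take j qs \<noteq> []"
  shows "walk H (rev (take i ps) @ take j qs)"
proof (cases "take i ps = []")
  case True
  then have "rev (take i ps) @ take j qs = take j qs" by simp
  then show ?thesis using assms(2,4) walk_take[of H qs j] by metis
next
  case False
  note ps = this
  show ?thesis
  proof (cases "take j qs = []")
    case True
    then have "rev (take i ps) @ take j qs = rev (take i ps)" by simp
    then show ?thesis using assms(1) ps walk_take[of H ps i] walk_rev by metis
  next
    case False
    have "last (rev (take i ps)) = hd ps" "hd (take j qs) = hd qs"
      using ps False by (simp_all add: last_rev)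
    then show ?thesis
      using assms(1-3) ps False walk_take[of H ps i] walk_take[of H qs j] by (simp add: walk_append_iff)
  qed
qed

lemma touching_joined_prefixes:
  assumes "walk H ps" "{hd ps, hd qs} \<in> H" "i < length ps" "set (take i ps) \<union> set (take j qs) \<noteq> {}"
  shows "touching H {ps ! i} (set (take i ps) \<union> set (take j qs))"
  unfolding touching_def
proof (cases i)
  case 0
  then have "take j qs \<noteq> []" using assms(4) by auto
  then have "hd qs \<in> set (take j qs)" by (metis hd_in_set hd_take neq0_conv take_eq_Nil)
  moreover have "ps ! i = hd ps" using 0 assms(3) by (simp add: hd_conv_nth)
  ultimately have "{ps ! i, hd qs} \<in> H" "hd qs \<in> set (take i ps) \<union> set (take j qs)"
    using assms(2) by auto
  then show "\<exists>x\<in>{ps ! i}. \<exists>y\<in>set (take i ps) \<union> set (take j qs). {x, y} \<in> H"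
    by blast
next
  case (Suc k)
  have "{ps ! k, ps ! Suc k} \<in> H" using assms(1,3) Suc unfolding walk_def by blast
  moreover have "ps ! k \<in> set (take i ps)"
    using Suc assms(3) by (metis lessI nth_mem nth_take length_take min.absorb4 less_imp_le_nat)
  ultimately show "\<exists>x\<in>{ps ! i}. \<exists>y\<in>set (take i ps) \<union> set (take j qs). {x, y} \<in> H"
    using Suc by (auto simp: insert_commute)
qed

lemma joined_prefixes_traversable_touching:
  assumes "walk H ps" "walk H qs" "{hd ps, hd qs} \<in> H" "i < length ps" "j < length qs"
    and "set (take i ps) \<union> set (take j qs) \<noteq> {}"
  shows "traversable H (set (take i ps) \<union> set (take j qs))"
    "touching H {ps ! i} (set (take i ps) \<union> set (take j qs))"
    "touching H {qs ! j} (set (take i ps) \<union> set (take j qs))"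
proof -
  have "walk H (rev (take i ps) @ take j qs)"
    using assms(6) by (intro walk_joined_prefixes[OF assms(1-3)]) auto
  then show "traversable H (set (take i ps) \<union> set (take j qs))"
    unfolding traversable_def by (intro exI[of _ "rev (take i ps) @ take j qs"]) simp
  show "touching H {ps ! i} (set (take i ps) \<union> set (take j qs))"
    using assms(1,3,4,6) by (rule touching_joined_prefixes)
  have "{hd qs, hd ps} \<in> H" using assms(3) by (simp add: insert_commute)
  then show "touching H {qs ! j} (set (take i ps) \<union> set (take j qs))"
    using touching_joined_prefixes[OF assms(2) _ assms(5), of ps i] assms(6) by (simp add: Un_commute)
qed

lemma joined_suffixes_traversable_touching:
  assumes "walk H ps" "walk H qs" "{last ps, last qs} \<in> H" "i < length ps" "j < length qs"
    and "set (drop (Suc i) ps) \<union> set (drop (Suc j) qs) \<noteq> {}"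
  shows "traversable H (set (drop (Suc i) ps) \<union> set (drop (Suc j) qs))"
    "touching H {ps ! i} (set (drop (Suc i) ps) \<union> set (drop (Suc j) qs))"
    "touching H {qs ! j} (set (drop (Suc i) ps) \<union> set (drop (Suc j) qs))"
proof -
  let ?i = "length ps - Suc i" and ?j = "length qs - Suc j"
  have suffixes: "set (drop (Suc i) ps) \<union> set (drop (Suc j) qs) = set (take ?i (rev ps)) \<union> set (take ?j (rev qs))"
    using assms(4,5) by (simp add: take_rev)
  have "ps ! i = rev ps ! ?i" "qs ! j = rev qs ! ?j" using assms(4,5) by (simp_all add: rev_nth)
  moreover have "{hd (rev ps), hd (rev qs)} \<in> H" using assms(3) by (simp add: hd_rev)
  ultimately show "traversable H (set (drop (Suc i) ps) \<union> set (drop (Suc j) qs))"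
    "touching H {ps ! i} (set (drop (Suc i) ps) \<union> set (drop (Suc j) qs))"
    "touching H {qs ! j} (set (drop (Suc i) ps) \<union> set (drop (Suc j) qs))"
    using joined_prefixes_traversable_touching[of H "rev ps" "rev qs" ?i ?j] assms
    unfolding suffixes by simp_all
qed

lemma joined_paths_no_crossing_edge:
  assumes td: "tree_decomposition V H I F B" and bags: "\<forall>t\<in>I. card (B t) \<le> 3" and "finite V"
    and walks: "walk H ps" "walk H qs" and "set ps \<union> set qs \<subseteq> V" and "distinct (ps @ qs)"
    and ends: "{hd ps, hd qs} \<in> H" "{last ps, last qs} \<in> H"
    and ij: "i < length ps" "j < length qs" "{ps ! i, qs ! j} \<in> H"
    and a: "a \<in> set (take i ps) \<union> set (take j qs)"
    and b: "b \<in> set (drop (Suc i) ps) \<union> set (drop (Suc j) qs)"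
  shows "{a, b} \<notin> H"
proof
  assume ab: "{a, b} \<in> H"
  define p q where "p = ps ! i" and "q = qs ! j"
  define Pre Suf where "Pre = set (take i ps) \<union> set (take j qs)"
    and "Suf = set (drop (Suc i) ps) \<union> set (drop (Suc j) qs)"
  define W where "W = {{p}, {q}, Pre, Suf}"
  have "distinct (take i ps @ p # drop (Suc i) ps @ take j qs @ q # drop (Suc j) qs)"
    unfolding p_def q_def by (rule distinct_append_nth_pieces) fact+
  then have sep: "p \<notin> Pre" "p \<notin> Suf" "q \<notin> Pre" "q \<notin> Suf" "p \<noteq> q" "Pre \<inter> Suf = {}"
    unfolding Pre_def Suf_def by auto
  have "Pre \<noteq> {}" "Suf \<noteq> {}" using a b Pre_def Suf_def by blast+
  note pre = joined_prefixes_traversable_touching[OF walks ends(1) ij(1,2), folded Pre_def p_def q_def]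
  note suf = joined_suffixes_traversable_touching[OF walks ends(2) ij(1,2), folded Suf_def p_def q_def]
  \<comment> \<open>{p}, {q}, Pre and Suf are the branch sets of a K4 minor\<close>
  have "touching H {p} {q}" "touching H Pre Suf"
    using ij(3) a b ab unfolding touching_def p_def q_def Pre_def Suf_def by auto
  then have "pairwise (touching H) W"
    using pre(2,3)[OF \<open>Pre \<noteq> {}\<close>] suf(2,3)[OF \<open>Suf \<noteq> {}\<close>]
    unfolding W_def pairwise_def by (auto simp: touching_commute)
  moreover have "pairwise disjnt W"
    using sep unfolding W_def by (auto simp: pairwise_insert disjnt_def)
  moreover have "\<forall>X\<in>W. X \<subseteq> V \<and> traversable H X"
    using pre(1)[OF \<open>Pre \<noteq> {}\<close>] suf(1)[OF \<open>Suf \<noteq> {}\<close>] \<open>set ps \<union> set qs \<subseteq> V\<close>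
      nth_mem[OF ij(1)] nth_mem[OF ij(2)]
    unfolding W_def p_def q_def Pre_def Suf_def by (auto dest: in_set_takeD in_set_dropD)
  ultimately obtain t where "t \<in> I" "card W \<le> card (B t)"
    using card_touching_family_le_bag[OF td \<open>finite V\<close>] by blast
  moreover have "card W = 4"
  proof -
    have "{p} \<noteq> {q}" "{p} \<noteq> Pre" "{p} \<noteq> Suf" "{q} \<noteq> Pre" "{q} \<noteq> Suf" "Pre \<noteq> Suf"
      using sep \<open>Pre \<noteq> {}\<close> by auto
    then show ?thesis unfolding W_def by simp
  qed
  ultimately show False using bags by fastforce
qed

theorem mainTheorem13:
  fixes V :: "'a set" and E :: "'a set set" and ps qs :: "'a list" and i j :: nat
  assumes "sgraph V E"
    and "induced_path V E ps" and "induced_path V E qs"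
    and "set ps \<inter> set qs = {}"
    and "treewidth (set ps \<union> set qs)
           (induced_edges E (set ps \<union> set qs) \<union> {{hd ps, hd qs}, {last ps, last qs}}) \<le> 2"
    and "i < length ps" and "j < length qs"
    and "{ps ! i, qs ! j} \<in> E"
  shows "separates (set ps \<union> set qs) (induced_edges E (set ps \<union> set qs)) {ps ! i, qs ! j}
           (set (take i ps) \<union> set (take j qs))
           (set (drop (Suc i) ps) \<union> set (drop (Suc j) qs))"
proof -
  define U where "U = set ps \<union> set qs"
  define H where "H = induced_edges E U \<union> {{hd ps, hd qs}, {last ps, last qs}}"
  have "ps \<noteq> []" "qs \<noteq> []" and dist: "distinct (ps @ qs)"
    using assms(2-4) by (simp_all add: induced_path_def)
  then have "\<forall>e\<in>H. e \<subseteq> U" unfolding H_def U_def induced_edges_def by auto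
  moreover have "treewidth U H \<le> 2" using assms(5) unfolding U_def H_def .
  ultimately obtain I F B where td: "tree_decomposition U H I F B" and "\<forall>t\<in>I. card (B t) \<le> 2 + 1"
    by (rule tree_decomposition_of_treewidth_le)
  then have bags: "\<forall>t\<in>I. card (B t) \<le> 3" by simp
  have "induced_edges E U \<subseteq> H" unfolding H_def by blast
  then have walks: "walk H ps" "walk H qs"
    using walk_induced_edges[OF induced_path_walk[OF assms(2)], of U]
      walk_induced_edges[OF induced_path_walk[OF assms(3)], of U]
    unfolding U_def by (simp_all add: walk_subset)
  have "{ps ! i, qs ! j} \<in> H"
    using assms(8) nth_mem[OF assms(6)] nth_mem[OF assms(7)] unfolding H_def U_def induced_edges_def by simp
  note no_edge = joined_paths_no_crossing_edge[OF td bags _ walks _ dist _ _ assms(6,7) this]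
  show ?thesis
    unfolding U_def[symmetric]
  proof (rule separatesI)
    show "U - {ps ! i, qs ! j} \<subseteq>
        set (take i ps) \<union> set (take j qs) \<union> (set (drop (Suc i) ps) \<union> set (drop (Suc j) qs))"
      using set_take_nth_drop[OF assms(6)] set_take_nth_drop[OF assms(7)] unfolding U_def by blast
    show "\<forall>a\<in>set (take i ps) \<union> set (take j qs). \<forall>b\<in>set (drop (Suc i) ps) \<union> set (drop (Suc j) qs).
        {a, b} \<notin> induced_edges E U"
      using no_edge unfolding H_def U_def by simp
  qed (use distinct_append_nth_pieces[OF dist assms(6,7)] in auto)
qed

end
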